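(* Under the hypotheses of the main theorem (separable Hilbert space $H$; i.i.d. strongly measurable random operators $\Psi_1,\Psi_2,\dots$ with values in positive contractions, distributed as $\Psi$ with $\mathbb E\|\Psi x\|^2\ge C\|x\|^2$ for all $x$, where $0<C<1$), let $R_0=I$ and $R_n=(I-\Psi_n)\cdots(I-\Psi_1)$ for $n\ge1$. Then for every $x\in H$ and $n\ge0$, \[ \mathbb E\|R_nx\|^{2}\le(1-C)^{n}\|x\|^{2}, \] and consequently $\|R_nx\|\to0$ almost surely.
   Context: Random operators are measurable in the strong operator sense ($\omega\mapsto\Psi(\omega)x$ measurable for each $x$). A positive contraction is a selfadjoint $T$ with $0\le T\le I$. *)

theory Defs
  imports "HOL-Analysis.Analysis" "HOL-Probability.Probability"
begin

definition positive_contraction :: "('a::real_inner \<Rightarrow>\<^sub>L 'a) \<Rightarrow> bool" where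
  "positive_contraction T \<longleftrightarrow>
     (\<forall>x y. inner (T x) y = inner x (T y)) \<and>
     (\<forall>x. 0 \<le> inner (T x) x \<and> inner (T x) x \<le> inner x x)"

definition strongly_measurable_op :: "'w measure \<Rightarrow> ('w \<Rightarrow> ('a::real_normed_vector \<Rightarrow>\<^sub>L 'a)) \<Rightarrow> bool" where
  "strongly_measurable_op M \<Phi> \<longleftrightarrow> (\<forall>x. (\<lambda>\<omega>. \<Phi> \<omega> x) \<in> borel_measurable M)"

definition op_events :: "'w measure \<Rightarrow> ('w \<Rightarrow> ('a::real_normed_vector \<Rightarrow>\<^sub>L 'a)) \<Rightarrow> 'w set set" where
  "op_events M \<Phi> = sigma_sets (space M)
     {(\<lambda>\<omega>. \<Phi> \<omega> x) -` B \<inter> space M | x B. B \<in> sets borel}"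

definition op_fdd :: "'w measure \<Rightarrow> ('w \<Rightarrow> ('a::real_normed_vector \<Rightarrow>\<^sub>L 'a)) \<Rightarrow> 'a list \<Rightarrow> (nat \<Rightarrow> 'a) measure" where
  "op_fdd M \<Phi> xs = distr M (Pi\<^sub>M {..<length xs} (\<lambda>_. borel))
      (\<lambda>\<omega>. \<lambda>i\<in>{..<length xs}. \<Phi> \<omega> (xs ! i))"

text \<open>Products R_0 = I, R_{n+1} = (I - \<Psi>_{n+1}) R_n, where \<Psi>_{n+1} is \<Psi>s n.\<close>
primrec Rprod :: "(nat \<Rightarrow> 'w \<Rightarrow> ('a::real_normed_vector \<Rightarrow>\<^sub>L 'a)) \<Rightarrow> nat \<Rightarrow> 'w \<Rightarrow> ('a \<Rightarrow>\<^sub>L 'a)" where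
  "Rprod \<Psi>s 0 \<omega> = id_blinfun"
| "Rprod \<Psi>s (Suc n) \<omega> = (id_blinfun - \<Psi>s n \<omega>) o\<^sub>L Rprod \<Psi>s n \<omega>"

end

theory Submission
  imports Defs
begin

(*
  Put Y = R_n x, so that R_(n+1) x = Y - Psi_(n+1) Y. For a positive contraction T,
  |y - T y|^2 <= |y|^2 - |T y|^2 because T^2 <= T. The vector Y is measurable with respect
  to the sigma-algebra generated by Psi_1, ..., Psi_n, which is independent of Psi_(n+1);
  integrating out Psi_(n+1) first (Fubini for the product law) gives
  E |Psi_(n+1) Y|^2 >= C E |Y|^2. Hence E |R_(n+1) x|^2 <= (1 - C) E |R_n x|^2. These
  expectations are summable, so sum_n |R_n x|^2 is finite almost surely and R_n x -> 0.
*)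

lemma positive_contraction_norm_sq_le_inner:
  fixes T :: "'a::real_inner \<Rightarrow>\<^sub>L 'a"
  assumes "positive_contraction T"
  shows "(norm (T y))\<^sup>2 \<le> inner (T y) y"
proof -
  have sym: "\<And>u v. inner (T u) v = inner u (T v)"
    and pos: "\<And>u. 0 \<le> inner (T u) u" and le: "\<And>u. inner (T u) u \<le> inner u u"
    using assms unfolding positive_contraction_def by auto
  \<comment> \<open>positivity of \<open>T\<close> at \<open>y - T y\<close> says \<open>T - T\<^sup>2 \<ge> 0\<close>\<close>
  have "0 \<le> inner (T (y - T y)) (y - T y)" by (rule pos)
  also have "\<dots> = inner (T y) y - inner (T y) (T y) - inner (T (T y)) y + inner (T (T y)) (T y)"
    by (simp add: blinfun.diff_right inner_diff_left inner_diff_right)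
  also have "inner (T (T y)) y = inner (T y) (T y)"
    using sym[of "T y" y] by (simp add: inner_commute)
  finally have "0 \<le> inner (T y) y - 2 * inner (T y) (T y) + inner (T (T y)) (T y)"
    by simp
  with le[of "T y"] show ?thesis
    by (simp add: power2_norm_eq_inner)
qed

lemma positive_contraction_norm_le:
  fixes T :: "'a::real_inner \<Rightarrow>\<^sub>L 'a"
  assumes "positive_contraction T"
  shows "norm (T y) \<le> norm y"
proof -
  have "norm (T y) * norm (T y) \<le> norm (T y) * norm y"
    using positive_contraction_norm_sq_le_inner[OF assms, of y] norm_cauchy_schwarz[of "T y" y]
    by (simp add: power2_eq_square)
  then show ?thesis
    by (cases "norm (T y) = 0") auto
qed

lemma positive_contraction_norm_diff_sq_le:
  fixes T :: "'a::real_inner \<Rightarrow>\<^sub>L 'a"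
  assumes "positive_contraction T"
  shows "(norm (y - T y))\<^sup>2 \<le> (norm y)\<^sup>2 - (norm (T y))\<^sup>2"
proof -
  have "(norm (y - T y))\<^sup>2 = (norm y)\<^sup>2 - 2 * inner (T y) y + (norm (T y))\<^sup>2"
    by (simp add: power2_norm_eq_inner inner_diff_left inner_diff_right inner_commute)
  with positive_contraction_norm_sq_le_inner[OF assms, of y] show ?thesis
    by simp
qed

lemma positive_contraction_norm_diff_le:
  fixes T :: "'a::real_inner \<Rightarrow>\<^sub>L 'a"
  assumes "positive_contraction T"
  shows "norm (y - T y) \<le> norm y"
proof -
  have "(norm (y - T y))\<^sup>2 \<le> (norm y)\<^sup>2"
    using positive_contraction_norm_diff_sq_le[OF assms, of y] zero_le_power2[of "norm (T y)"]
    by linarith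
  then show ?thesis
    using power2_le_imp_le norm_ge_zero by blast
qed

lemma borel_measurable_strong_op_apply:
  fixes \<Phi> :: "'w \<Rightarrow> ('a::{real_normed_vector, second_countable_topology} \<Rightarrow>\<^sub>L
                      'b::{real_normed_vector, second_countable_topology})"
  assumes Y: "Y \<in> borel_measurable N" and \<Phi>: "\<And>y. (\<lambda>\<omega>. \<Phi> \<omega> y) \<in> borel_measurable N"
  shows "(\<lambda>\<omega>. \<Phi> \<omega> (Y \<omega>)) \<in> borel_measurable N"
proof -
  obtain F where F: "\<And>i. simple_function N (F i)"
      "\<And>\<omega>. \<omega> \<in> space N \<Longrightarrow> (\<lambda>i. F i \<omega>) \<longlonglongrightarrow> Y \<omega>"
    using borel_measurable_implies_sequence_metric[OF Y, of 0] by blast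
  define G where "G i \<omega> = (\<Sum>y\<in>F i ` space N. indicator (F i -` {y} \<inter> space N) \<omega> *\<^sub>R \<Phi> \<omega> y)"
    for i \<omega>
  have G_meas: "G i \<in> borel_measurable N" for i
    unfolding G_def using simple_functionD(2)[OF F(1)] \<Phi>
    by (intro borel_measurable_sum borel_measurable_scaleR borel_measurable_indicator) auto
  have G_eq: "G i \<omega> = \<Phi> \<omega> (F i \<omega>)" if "\<omega> \<in> space N" for i \<omega>
  proof -
    have "G i \<omega> = (\<Sum>y\<in>F i ` space N. if F i \<omega> = y then \<Phi> \<omega> y else 0)"
      unfolding G_def by (intro sum.cong) (auto simp: indicator_def that)
    also have "\<dots> = \<Phi> \<omega> (F i \<omega>)"
      using simple_functionD(1)[OF F(1)] that by simp
    finally show ?thesis .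
  qed
  show ?thesis
  proof (rule borel_measurable_LIMSEQ_metric[OF G_meas])
    fix \<omega> assume "\<omega> \<in> space N"
    then show "(\<lambda>i. G i \<omega>) \<longlonglongrightarrow> \<Phi> \<omega> (Y \<omega>)"
      using bounded_linear.tendsto[OF blinfun.bounded_linear_right F(2)] by (simp add: G_eq)
  qed
qed

lemma (in prob_space) indep_var_subalgebras:
  assumes N: "subalgebra M N" and G: "subalgebra M G" and indep: "indep_set (sets N) (sets G)"
  shows "indep_var N (\<lambda>\<omega>. \<omega>) G (\<lambda>\<omega>. \<omega>)"
proof -
  have id_meas: "(\<lambda>\<omega>. \<omega>) \<in> measurable M K" if "subalgebra M K" for K
    using measurable_from_subalg[OF that measurable_ident_sets[OF refl]] .
  have preimages: "sigma_sets (space M) {(\<lambda>\<omega>. \<omega>) -` A \<inter> space M | A. A \<in> sets K} = sets K"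
    if K: "subalgebra M K" for K
  proof -
    have "A \<inter> space M = A" if "A \<in> sets K" for A
      using sets.sets_into_space[OF that] K by (auto simp: subalgebra_def)
    then have "{(\<lambda>\<omega>. \<omega>) -` A \<inter> space M | A. A \<in> sets K} = (\<lambda>A. A) ` sets K"
      unfolding Setcompr_eq_image vimage_ident by (rule image_cong[OF refl])
    then show ?thesis
      using K sets.sigma_sets_eq[of K] by (simp add: subalgebra_def)
  qed
  show ?thesis
    unfolding indep_var_eq preimages[OF N] preimages[OF G]
    using id_meas[OF N] id_meas[OF G] indep by simp
qed

lemma (in prob_space) integral_indep_var_iterated:
  fixes f :: "_ \<Rightarrow> real"
  assumes indep: "indep_var S X T Y" and f: "f \<in> borel_measurable (S \<Otimes>\<^sub>M T)"
    and bounded: "\<And>z. z \<in> space (S \<Otimes>\<^sub>M T) \<Longrightarrow> \<bar>f z\<bar> \<le> B"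
  shows "integrable (distr M S X) (\<lambda>s. \<integral>t. f (s, t) \<partial>distr M T Y)"
    and "(\<integral>\<omega>. f (X \<omega>, Y \<omega>) \<partial>M) = (\<integral>s. \<integral>t. f (s, t) \<partial>distr M T Y \<partial>distr M S X)"
proof -
  have X: "random_variable S X" and Y: "random_variable T Y"
    and joint: "distr M S X \<Otimes>\<^sub>M distr M T Y = distr M (S \<Otimes>\<^sub>M T) (\<lambda>\<omega>. (X \<omega>, Y \<omega>))"
    using indep by (auto simp: indep_var_distribution_eq)
  interpret S: prob_space "distr M S X"
    using X by (rule prob_space_distr)
  interpret T: prob_space "distr M T Y"
    using Y by (rule prob_space_distr)
  interpret XY: pair_prob_space "distr M S X" "distr M T Y" ..
  have integrable: "integrable (distr M S X \<Otimes>\<^sub>M distr M T Y) f"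
  proof (rule XY.P.integrable_const_bound[where B=B])
    show "AE z in distr M S X \<Otimes>\<^sub>M distr M T Y. norm (f z) \<le> B"
      using bounded by (intro AE_I2) (simp add: space_pair_measure)
    show "f \<in> borel_measurable (distr M S X \<Otimes>\<^sub>M distr M T Y)"
      using f by (subst measurable_cong_sets[OF sets_pair_measure_cong[OF sets_distr sets_distr] refl])
  qed
  then show "integrable (distr M S X) (\<lambda>s. \<integral>t. f (s, t) \<partial>distr M T Y)"
    by (rule XY.integrable_fst')
  have "(\<integral>\<omega>. f (X \<omega>, Y \<omega>) \<partial>M) = integral\<^sup>L (distr M (S \<Otimes>\<^sub>M T) (\<lambda>\<omega>. (X \<omega>, Y \<omega>))) f"
    using measurable_Pair[OF X Y] f by (rule integral_distr[symmetric])
  also have "\<dots> = (\<integral>s. \<integral>t. f (s, t) \<partial>distr M T Y \<partial>distr M S X)"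
    unfolding joint[symmetric] by (rule XY.integral_fst'[symmetric, OF integrable])
  finally show "(\<integral>\<omega>. f (X \<omega>, Y \<omega>) \<partial>M) = (\<integral>s. \<integral>t. f (s, t) \<partial>distr M T Y \<partial>distr M S X)" .
qed

lemma (in prob_space) integral_norm_sq_apply_indep_ge:
  fixes \<Psi> :: "'a \<Rightarrow> ('b::{real_inner, second_countable_topology} \<Rightarrow>\<^sub>L 'b)"
  assumes N: "subalgebra M N" and G: "subalgebra M G" and indep: "indep_set (sets N) (sets G)"
    and Y: "Y \<in> borel_measurable N" and Y_bounded: "\<And>\<omega>. \<omega> \<in> space M \<Longrightarrow> norm (Y \<omega>) \<le> B"
    and \<Psi>: "\<And>y. (\<lambda>\<omega>. \<Psi> \<omega> y) \<in> borel_measurable G"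
    and \<Psi>_contraction: "\<And>\<omega> y. \<omega> \<in> space M \<Longrightarrow> norm (\<Psi> \<omega> y) \<le> norm y"
    and lower_bound: "\<And>y. C * (norm y)\<^sup>2 \<le> (\<integral>\<omega>. (norm (\<Psi> \<omega> y))\<^sup>2 \<partial>M)"
  shows "C * (\<integral>\<omega>. (norm (Y \<omega>))\<^sup>2 \<partial>M) \<le> (\<integral>\<omega>. (norm (\<Psi> \<omega> (Y \<omega>)))\<^sup>2 \<partial>M)"
proof -
  define f where "f z = (norm (\<Psi> (snd z) (Y (fst z))))\<^sup>2" for z
  have space_N: "space N = space M" and space_G: "space G = space M"
    using N G by (auto simp: subalgebra_def)
  have id_N: "(\<lambda>\<omega>. \<omega>) \<in> measurable M N" and id_G: "(\<lambda>\<omega>. \<omega>) \<in> measurable M G"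
    using measurable_from_subalg[OF N measurable_ident_sets[OF refl]]
      measurable_from_subalg[OF G measurable_ident_sets[OF refl]] by auto
  have "(\<lambda>z. \<Psi> (snd z) (Y (fst z))) \<in> borel_measurable (N \<Otimes>\<^sub>M G)"
  proof (rule borel_measurable_strong_op_apply[where \<Phi>="\<lambda>z. \<Psi> (snd z)" and Y="\<lambda>z. Y (fst z)"])
    show "(\<lambda>z. Y (fst z)) \<in> borel_measurable (N \<Otimes>\<^sub>M G)"
      using Y by (rule measurable_compose[OF measurable_fst])
    show "(\<lambda>z. \<Psi> (snd z) y) \<in> borel_measurable (N \<Otimes>\<^sub>M G)" for y
      using \<Psi> by (rule measurable_compose[OF measurable_snd])
  qed
  then have f_meas: "f \<in> borel_measurable (N \<Otimes>\<^sub>M G)"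
    unfolding f_def by measurable
  have f_bounded: "\<bar>f z\<bar> \<le> B\<^sup>2" if "z \<in> space (N \<Otimes>\<^sub>M G)" for z
  proof -
    have "fst z \<in> space M" "snd z \<in> space M"
      using that by (auto simp: space_pair_measure space_N space_G)
    then have "norm (\<Psi> (snd z) (Y (fst z))) \<le> B"
      using order_trans[OF \<Psi>_contraction Y_bounded] by blast
    then show ?thesis
      unfolding f_def by (simp add: power_mono)
  qed
  \<comment> \<open>independence makes the law of \<open>\<omega> \<mapsto> (\<omega>, \<omega>)\<close> on \<open>N \<Otimes> G\<close> a product measure,
      so \<open>\<Psi>\<close> can be integrated out with \<open>Y\<close> frozen\<close>
  have iterated:
      "integrable (distr M N (\<lambda>\<omega>. \<omega>)) (\<lambda>s. \<integral>t. f (s, t) \<partial>distr M G (\<lambda>\<omega>. \<omega>))"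
      "(\<integral>\<omega>. f (\<omega>, \<omega>) \<partial>M) = (\<integral>s. \<integral>t. f (s, t) \<partial>distr M G (\<lambda>\<omega>. \<omega>) \<partial>distr M N (\<lambda>\<omega>. \<omega>))"
    using integral_indep_var_iterated[OF indep_var_subalgebras[OF N G indep] f_meas f_bounded]
    by simp_all
  have inner: "(\<integral>t. f (s, t) \<partial>distr M G (\<lambda>\<omega>. \<omega>)) = (\<integral>\<omega>. (norm (\<Psi> \<omega> (Y s)))\<^sup>2 \<partial>M)" for s
    using id_G \<Psi> by (simp add: f_def integral_distr)
  have "C * (\<integral>\<omega>. (norm (Y \<omega>))\<^sup>2 \<partial>M) = (\<integral>s. C * (norm (Y s))\<^sup>2 \<partial>distr M N (\<lambda>\<omega>. \<omega>))"
    using id_N Y by (simp add: integral_distr)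
  also have "\<dots> \<le> (\<integral>s. \<integral>t. f (s, t) \<partial>distr M G (\<lambda>\<omega>. \<omega>) \<partial>distr M N (\<lambda>\<omega>. \<omega>))"
  proof (rule Bochner_Integration.integral_mono[OF _ iterated(1)])
    interpret N': prob_space "distr M N (\<lambda>\<omega>. \<omega>)"
      using id_N by (rule prob_space_distr)
    show "integrable (distr M N (\<lambda>\<omega>. \<omega>)) (\<lambda>s. C * (norm (Y s))\<^sup>2)"
    proof (intro integrable_mult_right N'.integrable_const_bound[where B="B\<^sup>2"])
      show "AE s in distr M N (\<lambda>\<omega>. \<omega>). norm ((norm (Y s))\<^sup>2) \<le> B\<^sup>2"
        using Y_bounded by (intro AE_I2) (simp add: space_N power_mono)
      show "(\<lambda>s. (norm (Y s))\<^sup>2) \<in> borel_measurable (distr M N (\<lambda>\<omega>. \<omega>))"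
        using Y by measurable
    qed
  qed (unfold inner, rule lower_bound)
  also have "\<dots> = (\<integral>\<omega>. f (\<omega>, \<omega>) \<partial>M)"
    by (rule iterated(2)[symmetric])
  also have "\<dots> = (\<integral>\<omega>. (norm (\<Psi> \<omega> (Y \<omega>)))\<^sup>2 \<partial>M)"
    by (simp add: f_def)
  finally show ?thesis .
qed

lemma AE_tendsto_zero_if_summable_integral:
  fixes h :: "nat \<Rightarrow> 'a \<Rightarrow> real"
  assumes integrable: "\<And>n. integrable M (h n)" and nonneg: "\<And>n x. x \<in> space M \<Longrightarrow> 0 \<le> h n x"
    and summable: "summable (\<lambda>n. \<integral>x. h n x \<partial>M)"
  shows "AE x in M. (\<lambda>n. h n x) \<longlonglongrightarrow> 0"
proof -
  have meas: "(\<lambda>x. ennreal (h n x)) \<in> borel_measurable M" for n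
    using borel_measurable_integrable[OF integrable] by (rule measurable_compose) (rule measurable_ennreal)
  have "(\<integral>\<^sup>+x. (\<Sum>n. ennreal (h n x)) \<partial>M) = (\<Sum>n. \<integral>\<^sup>+x. ennreal (h n x) \<partial>M)"
    by (rule nn_integral_suminf[OF meas])
  also have "\<dots> = (\<Sum>n. ennreal (\<integral>x. h n x \<partial>M))"
    by (intro arg_cong[where f=suminf] ext nn_integral_eq_integral integrable AE_I2 nonneg)
  also have "\<dots> = ennreal (\<Sum>n. \<integral>x. h n x \<partial>M)"
    by (intro suminf_ennreal2 summable Bochner_Integration.integral_nonneg nonneg)
  finally have "(\<integral>\<^sup>+x. (\<Sum>n. ennreal (h n x)) \<partial>M) \<noteq> \<infinity>"
    by simp
  then have "AE x in M. (\<Sum>n. ennreal (h n x)) \<noteq> \<infinity>"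
    by (rule nn_integral_PInf_AE[rotated]) (intro borel_measurable_suminf_order meas)
  then show ?thesis
  proof (rule AE_mp, intro AE_I2 impI)
    fix x assume "x \<in> space M" and "(\<Sum>n. ennreal (h n x)) \<noteq> \<infinity>"
    then have "summable (\<lambda>n. h n x)"
      using nonneg by (intro summable_suminf_not_top) (auto simp: infinity_ennreal_def)
    then show "(\<lambda>n. h n x) \<longlonglongrightarrow> 0"
      by (rule summable_LIMSEQ_zero)
  qed
qed

definition op_family_sigma ::
    "'w measure \<Rightarrow> ('i \<Rightarrow> 'w \<Rightarrow> ('a::real_normed_vector \<Rightarrow>\<^sub>L 'a)) \<Rightarrow> 'i set \<Rightarrow> 'w measure" where
  "op_family_sigma M \<Psi>s I = sigma (space M) (\<Union>i\<in>I. op_events M (\<Psi>s i))"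

lemma op_events_subset_Pow: "op_events M \<Phi> \<subseteq> Pow (space M)"
  unfolding op_events_def by (rule subsetI, rule PowI, erule sigma_sets_into_sp[rotated]) auto

lemma sigma_algebra_op_events: "sigma_algebra (space M) (op_events M \<Phi>)"
  unfolding op_events_def by (rule sigma_algebra_sigma_sets) auto

lemma op_events_subset_sets:
  assumes "strongly_measurable_op M \<Phi>"
  shows "op_events M \<Phi> \<subseteq> sets M"
  unfolding op_events_def
  by (rule sets.sigma_sets_subset)
     (use assms in \<open>auto simp: strongly_measurable_op_def intro: measurable_sets\<close>)

lemma space_op_family_sigma [simp]: "space (op_family_sigma M \<Psi>s I) = space M"
  unfolding op_family_sigma_def using op_events_subset_Pow by (intro space_measure_of) blast

lemma sets_op_family_sigma:
  "sets (op_family_sigma M \<Psi>s I) = sigma_sets (space M) (\<Union>i\<in>I. op_events M (\<Psi>s i))"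
  unfolding op_family_sigma_def using op_events_subset_Pow by (intro sets_measure_of) blast

lemma subalgebra_op_family_sigma:
  assumes "\<And>i. i \<in> I \<Longrightarrow> strongly_measurable_op M (\<Psi>s i)"
  shows "subalgebra M (op_family_sigma M \<Psi>s I)"
  unfolding subalgebra_def sets_op_family_sigma
  using op_events_subset_sets[OF assms] by (auto intro!: sets.sigma_sets_subset)

lemma subalgebra_op_family_sigma_mono:
  "I \<subseteq> J \<Longrightarrow> subalgebra (op_family_sigma M \<Psi>s J) (op_family_sigma M \<Psi>s I)"
  unfolding subalgebra_def sets_op_family_sigma by (auto intro!: sigma_sets_mono')

lemma measurable_op_family_sigma:
  fixes \<Psi>s :: "'i \<Rightarrow> 'w \<Rightarrow> ('a::real_normed_vector \<Rightarrow>\<^sub>L 'a)"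
  assumes "i \<in> I"
  shows "(\<lambda>\<omega>. \<Psi>s i \<omega> y) \<in> borel_measurable (op_family_sigma M \<Psi>s I)"
proof (rule measurableI)
  fix A :: "'a set" assume "A \<in> sets borel"
  then have "(\<lambda>\<omega>. \<Psi>s i \<omega> y) -` A \<inter> space M \<in> op_events M (\<Psi>s i)"
    unfolding op_events_def by (intro sigma_sets.Basic) blast
  then show "(\<lambda>\<omega>. \<Psi>s i \<omega> y) -` A \<inter> space (op_family_sigma M \<Psi>s I) \<in> sets (op_family_sigma M \<Psi>s I)"
    using assms by (auto simp: sets_op_family_sigma)
qed auto

lemma (in prob_space) indep_set_op_family_sigma:
  assumes indep: "indep_sets (\<lambda>i. op_events M (\<Psi>s i)) UNIV" and disjoint: "I \<inter> J = {}"
  shows "indep_set (sets (op_family_sigma M \<Psi>s I)) (sets (op_family_sigma M \<Psi>s J))"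
proof -
  have "indep_sets (\<lambda>b. sigma_sets (space M) (\<Union>i\<in>case_bool I J b. op_events M (\<Psi>s i))) UNIV"
  proof (rule indep_sets_collect_sigma)
    show "indep_sets (\<lambda>i. op_events M (\<Psi>s i)) (\<Union>b\<in>UNIV. case_bool I J b)"
      by (rule indep_sets_mono_index[OF _ indep]) simp
    show "Int_stable (op_events M (\<Psi>s i))" for i
      by (rule algebra.Int_stable[OF sigma_algebra.axioms(1)[OF sigma_algebra_op_events]])
    show "disjoint_family_on (case_bool I J) UNIV"
      using disjoint by (auto simp: disjoint_family_on_def split: bool.splits)
  qed
  moreover have "(\<lambda>b. sigma_sets (space M) (\<Union>i\<in>case_bool I J b. op_events M (\<Psi>s i)))
      = case_bool (sets (op_family_sigma M \<Psi>s I)) (sets (op_family_sigma M \<Psi>s J))"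
    by (rule ext) (simp add: sets_op_family_sigma split: bool.splits)
  ultimately show ?thesis
    unfolding indep_set_def by simp
qed

lemma integral_norm_sq_apply_eq_if_op_fdd_eq:
  fixes \<Phi> \<Phi>' :: "'w \<Rightarrow> ('a::{real_normed_vector, second_countable_topology} \<Rightarrow>\<^sub>L 'a)"
  assumes "strongly_measurable_op M \<Phi>" "strongly_measurable_op M \<Phi>'"
    and "op_fdd M \<Phi> [y] = op_fdd M \<Phi>' [y]"
  shows "(\<integral>\<omega>. (norm (\<Phi> \<omega> y))\<^sup>2 \<partial>M) = (\<integral>\<omega>. (norm (\<Phi>' \<omega> y))\<^sup>2 \<partial>M)"
proof -
  have law: "(\<integral>\<omega>. (norm (\<Phi> \<omega> y))\<^sup>2 \<partial>M) = (\<integral>f. (norm (f 0))\<^sup>2 \<partial>op_fdd M \<Phi> [y])"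
    if "strongly_measurable_op M \<Phi>" for \<Phi> :: "'w \<Rightarrow> ('a \<Rightarrow>\<^sub>L 'a)"
  proof -
    have "(\<lambda>\<omega>. \<lambda>i\<in>{..<length [y]}. \<Phi> \<omega> ([y] ! i)) \<in> M \<rightarrow>\<^sub>M Pi\<^sub>M {..<length [y]} (\<lambda>_. borel)"
      using that unfolding strongly_measurable_op_def by (intro measurable_restrict) auto
    moreover have "(\<lambda>f. (norm (f 0))\<^sup>2) \<in> borel_measurable (Pi\<^sub>M {..<length [y]} (\<lambda>_. (borel :: 'a measure)))"
      by measurable
    ultimately show ?thesis
      unfolding op_fdd_def by (subst integral_distr) simp_all
  qed
  show ?thesis
    using law[OF assms(1)] law[OF assms(2)] assms(3) by simp
qed

lemma Rprod_Suc_apply: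
  "Rprod \<Psi>s (Suc n) \<omega> x = Rprod \<Psi>s n \<omega> x - \<Psi>s n \<omega> (Rprod \<Psi>s n \<omega> x)"
  by (simp add: blinfun.diff_left)

lemma measurable_Rprod:
  fixes \<Psi>s :: "nat \<Rightarrow> 'w \<Rightarrow> ('a::{real_normed_vector, second_countable_topology} \<Rightarrow>\<^sub>L 'a)"
  shows "(\<lambda>\<omega>. Rprod \<Psi>s n \<omega> x) \<in> borel_measurable (op_family_sigma M \<Psi>s {..<n})"
proof (induction n)
  case (Suc n)
  have R: "(\<lambda>\<omega>. Rprod \<Psi>s n \<omega> x) \<in> borel_measurable (op_family_sigma M \<Psi>s {..<Suc n})"
    by (rule measurable_from_subalg[OF subalgebra_op_family_sigma_mono Suc.IH]) auto
  have \<Psi>: "(\<lambda>\<omega>. \<Psi>s n \<omega> y) \<in> borel_measurable (op_family_sigma M \<Psi>s {..<Suc n})" for y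
    by (rule measurable_op_family_sigma) simp
  show ?case
    unfolding Rprod_Suc_apply by (rule borel_measurable_diff[OF R borel_measurable_strong_op_apply[OF R \<Psi>]])
qed simp

locale positive_contraction_products = prob_space M
  for M :: "'w measure"
    and \<Psi>s :: "nat \<Rightarrow> 'w \<Rightarrow> ('a::{real_inner, second_countable_topology} \<Rightarrow>\<^sub>L 'a)"
    and C :: real +
  assumes strongly_measurable_\<Psi>s: "\<And>n. strongly_measurable_op M (\<Psi>s n)"
    and positive_contraction_\<Psi>s: "\<And>n \<omega>. \<omega> \<in> space M \<Longrightarrow> positive_contraction (\<Psi>s n \<omega>)"
    and indep_\<Psi>s: "indep_sets (\<lambda>n. op_events M (\<Psi>s n)) UNIV"
    and lower_bound: "\<And>n y. C * (norm y)\<^sup>2 \<le> (\<integral>\<omega>. (norm (\<Psi>s n \<omega> y))\<^sup>2 \<partial>M)"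
    and C_pos: "0 < C" and C_le_1: "C \<le> 1"
begin

lemma norm_Rprod_le: "\<omega> \<in> space M \<Longrightarrow> norm (Rprod \<Psi>s n \<omega> x) \<le> norm x"
proof (induction n)
  case (Suc n)
  have "norm (Rprod \<Psi>s (Suc n) \<omega> x) \<le> norm (Rprod \<Psi>s n \<omega> x)"
    unfolding Rprod_Suc_apply
    by (rule positive_contraction_norm_diff_le[OF positive_contraction_\<Psi>s[OF Suc.prems]])
  with Suc show ?case
    by simp
qed simp

lemma borel_measurable_Rprod: "(\<lambda>\<omega>. Rprod \<Psi>s n \<omega> x) \<in> borel_measurable M"
  by (rule measurable_from_subalg[OF subalgebra_op_family_sigma[OF strongly_measurable_\<Psi>s]
        measurable_Rprod])

lemma integrable_norm_Rprod_sq: "integrable M (\<lambda>\<omega>. (norm (Rprod \<Psi>s n \<omega> x))\<^sup>2)"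
proof (rule integrable_const_bound[where B="(norm x)\<^sup>2"])
  show "AE \<omega> in M. norm ((norm (Rprod \<Psi>s n \<omega> x))\<^sup>2) \<le> (norm x)\<^sup>2"
    using norm_Rprod_le by (intro AE_I2) (simp add: power_mono)
  show "(\<lambda>\<omega>. (norm (Rprod \<Psi>s n \<omega> x))\<^sup>2) \<in> borel_measurable M"
    using borel_measurable_Rprod by measurable
qed

lemma norm_\<Psi>s_le: "\<omega> \<in> space M \<Longrightarrow> norm (\<Psi>s n \<omega> y) \<le> norm y"
  by (rule positive_contraction_norm_le[OF positive_contraction_\<Psi>s])

lemma integrable_norm_\<Psi>s_Rprod_sq: "integrable M (\<lambda>\<omega>. (norm (\<Psi>s n \<omega> (Rprod \<Psi>s n \<omega> x)))\<^sup>2)"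
proof (rule integrable_const_bound[where B="(norm x)\<^sup>2"])
  show "AE \<omega> in M. norm ((norm (\<Psi>s n \<omega> (Rprod \<Psi>s n \<omega> x)))\<^sup>2) \<le> (norm x)\<^sup>2"
    using order_trans[OF norm_\<Psi>s_le norm_Rprod_le] by (intro AE_I2) (simp add: power_mono)
  have "(\<lambda>\<omega>. \<Psi>s n \<omega> (Rprod \<Psi>s n \<omega> x)) \<in> borel_measurable M"
    by (rule borel_measurable_strong_op_apply[OF borel_measurable_Rprod])
       (use strongly_measurable_\<Psi>s in \<open>simp add: strongly_measurable_op_def\<close>)
  then show "(\<lambda>\<omega>. (norm (\<Psi>s n \<omega> (Rprod \<Psi>s n \<omega> x)))\<^sup>2) \<in> borel_measurable M"
    by measurable
qed

lemma integral_norm_\<Psi>s_Rprod_sq_ge: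
  "C * (\<integral>\<omega>. (norm (Rprod \<Psi>s n \<omega> x))\<^sup>2 \<partial>M) \<le> (\<integral>\<omega>. (norm (\<Psi>s n \<omega> (Rprod \<Psi>s n \<omega> x)))\<^sup>2 \<partial>M)"
proof (rule integral_norm_sq_apply_indep_ge[where N="op_family_sigma M \<Psi>s {..<n}"
      and G="op_family_sigma M \<Psi>s {n}" and B="norm x"])
  show "subalgebra M (op_family_sigma M \<Psi>s {..<n})" "subalgebra M (op_family_sigma M \<Psi>s {n})"
    by (intro subalgebra_op_family_sigma strongly_measurable_\<Psi>s)+
  show "indep_set (sets (op_family_sigma M \<Psi>s {..<n})) (sets (op_family_sigma M \<Psi>s {n}))"
    by (rule indep_set_op_family_sigma[OF indep_\<Psi>s]) simp
  show "(\<lambda>\<omega>. \<Psi>s n \<omega> y) \<in> borel_measurable (op_family_sigma M \<Psi>s {n})" for y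
    by (rule measurable_op_family_sigma) simp
qed (simp_all add: measurable_Rprod norm_Rprod_le norm_\<Psi>s_le lower_bound)

lemma integral_norm_Rprod_Suc_le:
  "(\<integral>\<omega>. (norm (Rprod \<Psi>s (Suc n) \<omega> x))\<^sup>2 \<partial>M) \<le> (1 - C) * (\<integral>\<omega>. (norm (Rprod \<Psi>s n \<omega> x))\<^sup>2 \<partial>M)"
proof -
  let ?Y = "\<lambda>\<omega>. Rprod \<Psi>s n \<omega> x"
  have "(\<integral>\<omega>. (norm (Rprod \<Psi>s (Suc n) \<omega> x))\<^sup>2 \<partial>M)
      \<le> (\<integral>\<omega>. (norm (?Y \<omega>))\<^sup>2 - (norm (\<Psi>s n \<omega> (?Y \<omega>)))\<^sup>2 \<partial>M)"
  proof (rule Bochner_Integration.integral_mono)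
    show "integrable M (\<lambda>\<omega>. (norm (?Y \<omega>))\<^sup>2 - (norm (\<Psi>s n \<omega> (?Y \<omega>)))\<^sup>2)"
      using integrable_norm_Rprod_sq integrable_norm_\<Psi>s_Rprod_sq
      by (rule Bochner_Integration.integrable_diff)
    show "(norm (Rprod \<Psi>s (Suc n) \<omega> x))\<^sup>2 \<le> (norm (?Y \<omega>))\<^sup>2 - (norm (\<Psi>s n \<omega> (?Y \<omega>)))\<^sup>2"
      if "\<omega> \<in> space M" for \<omega>
      unfolding Rprod_Suc_apply
      by (rule positive_contraction_norm_diff_sq_le[OF positive_contraction_\<Psi>s[OF that]])
  qed (rule integrable_norm_Rprod_sq)
  also have "\<dots> = (\<integral>\<omega>. (norm (?Y \<omega>))\<^sup>2 \<partial>M) - (\<integral>\<omega>. (norm (\<Psi>s n \<omega> (?Y \<omega>)))\<^sup>2 \<partial>M)"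
    using integrable_norm_Rprod_sq integrable_norm_\<Psi>s_Rprod_sq
    by (rule Bochner_Integration.integral_diff)
  also have "\<dots> \<le> (1 - C) * (\<integral>\<omega>. (norm (?Y \<omega>))\<^sup>2 \<partial>M)"
    using integral_norm_\<Psi>s_Rprod_sq_ge by (simp add: algebra_simps)
  finally show ?thesis .
qed

lemma integral_norm_Rprod_le:
  "(\<integral>\<omega>. (norm (Rprod \<Psi>s n \<omega> x))\<^sup>2 \<partial>M) \<le> (1 - C) ^ n * (norm x)\<^sup>2"
proof (induction n)
  case (Suc n)
  have "(\<integral>\<omega>. (norm (Rprod \<Psi>s (Suc n) \<omega> x))\<^sup>2 \<partial>M) \<le> (1 - C) * (\<integral>\<omega>. (norm (Rprod \<Psi>s n \<omega> x))\<^sup>2 \<partial>M)"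
    by (rule integral_norm_Rprod_Suc_le)
  also have "\<dots> \<le> (1 - C) * ((1 - C) ^ n * (norm x)\<^sup>2)"
    using Suc.IH C_le_1 by (intro mult_left_mono) simp_all
  finally show ?case
    by simp
qed (simp add: prob_space)

lemma AE_norm_Rprod_tendsto_0: "AE \<omega> in M. (\<lambda>n. norm (Rprod \<Psi>s n \<omega> x)) \<longlonglongrightarrow> 0"
proof -
  have "summable (\<lambda>n. (1 - C) ^ n * (norm x)\<^sup>2)"
    using C_pos C_le_1 by (intro summable_mult2 summable_geometric) simp
  then have "summable (\<lambda>n. \<integral>\<omega>. (norm (Rprod \<Psi>s n \<omega> x))\<^sup>2 \<partial>M)"
    by (rule summable_comparison_test') (simp add: integral_norm_Rprod_le)
  then have "AE \<omega> in M. (\<lambda>n. (norm (Rprod \<Psi>s n \<omega> x))\<^sup>2) \<longlonglongrightarrow> 0"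
    by (intro AE_tendsto_zero_if_summable_integral integrable_norm_Rprod_sq) simp
  then show ?thesis
  proof eventually_elim
    case (elim \<omega>)
    then show ?case
      using tendsto_real_sqrt by fastforce
  qed
qed

end

theorem mainTheorem3:
  fixes M :: "'w measure"
    and \<Psi>s :: "nat \<Rightarrow> 'w \<Rightarrow> ('a::{real_inner, complete_space, second_countable_topology} \<Rightarrow>\<^sub>L 'a)"
    and \<Psi> :: "'w \<Rightarrow> ('a \<Rightarrow>\<^sub>L 'a)"
    and C :: real
  assumes "prob_space M"
    and "\<And>n. strongly_measurable_op M (\<Psi>s n)"
    and "strongly_measurable_op M \<Psi>"
    and "\<And>n \<omega>. \<omega> \<in> space M \<Longrightarrow> positive_contraction (\<Psi>s n \<omega>)"
    and "\<And>\<omega>. \<omega> \<in> space M \<Longrightarrow> positive_contraction (\<Psi> \<omega>)"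
    and "prob_space.indep_sets M (\<lambda>n. op_events M (\<Psi>s n)) UNIV"
    and "\<And>n xs. op_fdd M (\<Psi>s n) xs = op_fdd M \<Psi> xs"
    and "0 < C" and "C < 1"
    and "\<And>x. (\<integral>\<omega>. (norm (\<Psi> \<omega> x))\<^sup>2 \<partial>M) \<ge> C * (norm x)\<^sup>2"
  shows "(\<forall>x n. integrable M (\<lambda>\<omega>. (norm (Rprod \<Psi>s n \<omega> x))\<^sup>2) \<and>
                (\<integral>\<omega>. (norm (Rprod \<Psi>s n \<omega> x))\<^sup>2 \<partial>M) \<le> (1 - C) ^ n * (norm x)\<^sup>2)
       \<and> (\<forall>x. AE \<omega> in M. (\<lambda>n. norm (Rprod \<Psi>s n \<omega> x)) \<longlonglongrightarrow> 0)"
proof -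
  \<comment> \<open>of \<open>\<Psi>\<close> only its second moments enter, through the common law\<close>
  have lower_bound: "C * (norm y)\<^sup>2 \<le> (\<integral>\<omega>. (norm (\<Psi>s n \<omega> y))\<^sup>2 \<partial>M)" for n y
    using assms(10)[of y] integral_norm_sq_apply_eq_if_op_fdd_eq[OF assms(2,3,7)] by simp
  interpret positive_contraction_products M \<Psi>s C
    using assms(1,2,4,6,8,9) lower_bound
    by (simp add: positive_contraction_products_def positive_contraction_products_axioms_def)
  show ?thesis
    using integrable_norm_Rprod_sq integral_norm_Rprod_le AE_norm_Rprod_tendsto_0 by blast
qed

end
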